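(* Consider the part-wise coactive learning algorithm (PCL) described in the context, run for $T$ iterations with any ordering $p_1,\dots,p_n$ of the basic parts and any rule for selecting the part $p^t$ at each iteration, interacting with a conditionally $\alpha$-informative user with $\alpha\in(0,1]$. Then $$\frac{1}{T}\sum_{t=1}^T \mathrm{CREG}_{p^t}(x^t)\le \frac{2DS\|\mathbf{w}^*\|}{\alpha\sqrt{T}}+\frac{1}{\alpha T}\sum_{t=1}^T\zeta^t,$$ where $\|\cdot\|$ is the Euclidean norm and $S:=\max_{p\in\mathcal{P}}|I_p|$.
   Context: Setting. $\mathcal{X}$ is a set of feasible configurations, with feature map $\boldsymbol{\phi}:\mathcal{X}\to\mathbb{R}^m$ satisfying $\|\boldsymbol{\phi}(x)\|_\infty\le D$ for all $x\in\mathcal{X}$. The (unknown) true utility is $u^*(x)=\langle\mathbf{w}^*,\boldsymbol{\phi}(x)\rangle$ with $\mathbf{w}^*\in\mathbb{R}^m$. There is a finite set $\mathcal{P}$ of $n$ basic parts; for $p\in\mathcal{P}$, $x_p\in\mathcal{X}_p$ is the partial configuration of $x$ on $p$ and $x_{\overline{p}}$ the partial configuration on $\overline{p}=\mathcal{P}\setminus\{p\}$; the combination operator satisfies $x=x_p\circ x_{\overline p}$, and $y_p\circ x_{\overline p}$ (for $y_p\in\mathcal{X}_p$) is the configuration obtained from $x$ by replacing its $p$-portion by $y_p$. Each basic part $p$ has a feature subset $I_p\subseteq[m]$ consisting exactly of the features that depend on $x_p$ (for $i\notin I_p$, $\phi_i(x)$ does not change when $x_p$ changes with $x_{\overline p}$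 fixed); each $I_p$ contains at least one index not in any $I_q$, $q\ne p$, and $\bigcup_p I_p=[m]$. For a weight vector $\mathbf{w}$ and $Q\subseteq[m]$, write $u[Q](x)=\sum_{i\in Q}w_i\phi_i(x)$; $u^*[Q]$ uses $\mathbf{w}^*$ and $u^t[Q]$ uses $\mathbf{w}^t$. Conditional regret: $\mathrm{CREG}_p(x)=u^*(x^*_p\circ x_{\overline p})-u^*(x)$ where $x^*_p\in\arg\max_{y_p\in\mathcal{X}_p}u^*(y_p\circ x_{\overline p})$ (maxima assumed to exist). Algorithm PCL. Fix an ordering $p_1,\dots,p_n$ of $\mathcal{P}$ and let $J_k:=I_{p_k}\setminus\bigcup_{j=k+1}^n I_{p_j}$. Set $\mathbf{w}^1=0$ and an initial configuration $x^0\in\mathcal{X}$. For $t=1,\dots,T$: select a basic part $p^t=p_k$ and write $I^t=I_{p_k}$, $J^t=J_k$; define $x^t$ by $x^t_{\overline{p^t}}=x^{t-1}_{\overline{p^t}}$ and $x^t_{p^t}\in\arg\max_{y\in\mathcal{X}_{p^t}}u^t[J^t](y\circ x^{t-1}_{\overline{p^t}})$. The user returns an improvement $\hat x^t_{p^t}\in\mathcal{X}_{p^t}$ (returning $\hat x^t_{p^t}=x^t_{p^t}$ if it cannot be improved); write $\hat x^t=\hat x^t_{p^t}\circ x^t_{\overline{p^t}}$. If $u^t[I^t](\hat x^t)-u^t[I^t](x^t)\le0$ set $Q^t=I^t$, otherwise $Q^t=J^t$. Update $w^{t+1}_i=w^t_i$ for $i\notin Q^t$ and $w^{t+1}_i=w^t_i+\phi_i(\hat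 x^t)-\phi_i(x^t)$ for $i\in Q^t$. Conditional $\alpha$-informativeness: for all $t$, $u^*[I^t](\hat x^t)-u^*[I^t](x^t)\ge\alpha\big(u^*[I^t](x^*_{p^t}\circ x^t_{\overline{p^t}})-u^*[I^t](x^t)\big)$, where $x^*_{p^t}\in\arg\max_{y\in\mathcal{X}_{p^t}}u^*(y\circ x^t_{\overline{p^t}})$. Missing utility gain: $\zeta^t=0$ if $Q^t=I^t$, and $\zeta^t=u^*[I^t\setminus J^t](\hat x^t)-u^*[I^t\setminus J^t](x^t)$ if $Q^t=J^t$. *)

theory Defs
  imports Complex_Main
begin

text \<open>Configurations are modelled as functions from basic parts to partial
configurations: for a configuration x and a part p, x p is the partial
configuration x_p, and x(p := y) is the combination y_p \<circ> x_(P - p).\<close>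

definition upart :: "(nat \<Rightarrow> real) \<Rightarrow> ('x \<Rightarrow> nat \<Rightarrow> real) \<Rightarrow> nat set \<Rightarrow> 'x \<Rightarrow> real" where
  "upart w phi Q x = (\<Sum>i\<in>Q. w i * phi x i)"

text \<open>J_k = I_(p_k) minus the union of I_(p_j) for j > k (ordering given by list ps, 0-based).\<close>
definition Jset :: "('p \<Rightarrow> nat set) \<Rightarrow> 'p list \<Rightarrow> nat \<Rightarrow> nat set" where
  "Jset I ps k = I (ps ! k) - (\<Union>j\<in>{Suc k..<length ps}. I (ps ! j))"

definition CREG :: "(nat \<Rightarrow> real) \<Rightarrow> (('p \<Rightarrow> 'a) \<Rightarrow> nat \<Rightarrow> real) \<Rightarrow> nat \<Rightarrow> ('p \<Rightarrow> 'a set)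
    \<Rightarrow> 'p \<Rightarrow> ('p \<Rightarrow> 'a) \<Rightarrow> real" where
  "CREG ws phi m Xp p x =
     (SUP y\<in>Xp p. upart ws phi {..<m} (x(p := y))) - upart ws phi {..<m} x"

definition Qset :: "('p \<Rightarrow> nat set) \<Rightarrow> 'p list \<Rightarrow> (nat \<Rightarrow> real) \<Rightarrow> (('p \<Rightarrow> 'a) \<Rightarrow> nat \<Rightarrow> real)
    \<Rightarrow> nat \<Rightarrow> ('p \<Rightarrow> 'a) \<Rightarrow> ('p \<Rightarrow> 'a) \<Rightarrow> nat set" where
  "Qset I ps wt phi kt xt xht =
     (if upart wt phi (I (ps ! kt)) xht - upart wt phi (I (ps ! kt)) xt \<le> 0
      then I (ps ! kt) else Jset I ps kt)"

definition zeta :: "(nat \<Rightarrow> real) \<Rightarrow> ('p \<Rightarrow> nat set) \<Rightarrow> 'p list \<Rightarrow> (nat \<Rightarrow> real)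
    \<Rightarrow> (('p \<Rightarrow> 'a) \<Rightarrow> nat \<Rightarrow> real) \<Rightarrow> nat \<Rightarrow> ('p \<Rightarrow> 'a) \<Rightarrow> ('p \<Rightarrow> 'a) \<Rightarrow> real" where
  "zeta ws I ps wt phi kt xt xht =
     (if Qset I ps wt phi kt xt xht = I (ps ! kt) then 0
      else upart ws phi (I (ps ! kt) - Jset I ps kt) xht
         - upart ws phi (I (ps ! kt) - Jset I ps kt) xt)"

definition eucl_norm :: "(nat \<Rightarrow> real) \<Rightarrow> nat \<Rightarrow> real" where
  "eucl_norm w m = sqrt (\<Sum>i<m. (w i)\<^sup>2)"

end

theory Submission
  imports Defs "HOL-Analysis.Convex"
begin

text \<open>Summing the informativeness inequality over the rounds bounds \<alpha> times the cumulative
conditional regret by the inner product of w* with the final weight vector plus the missing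
gains \<zeta>^t: each update adds the feature difference on Q^t, and the part of I^t outside Q^t
contributes exactly \<zeta>^t. By Cauchy-Schwarz it remains to bound the final weight vector.
The choice of Q^t makes every update non-positively correlated with the current weights
(by the sign test, or because x^t maximises u^t on J^t), so as in the perceptron analysis
the squared norm grows by at most 4 D^2 S per round, giving a norm of at most
2 D sqrt (S T) \<le> 2 D S sqrt T.\<close>

lemma upart_subset_diff:
  assumes "finite R" and "Q \<subseteq> R"
  shows "upart w phi R z = upart w phi Q z + upart w phi (R - Q) z"
  unfolding upart_def using sum.subset_diff[OF assms(2,1)] by (simp add: add.commute)

definition feature_gain :: "('x \<Rightarrow> nat \<Rightarrow> real) \<Rightarrow> nat set \<Rightarrow> 'x \<Rightarrow> 'x \<Rightarrow> nat \<Rightarrow> real" where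
  "feature_gain phi Q a b i = (if i \<in> Q then phi b i - phi a i else 0)"

lemma sum_mult_feature_gain:
  assumes "Q \<subseteq> {..<m}"
  shows "(\<Sum>i<m. v i * feature_gain phi Q a b i) = upart v phi Q b - upart v phi Q a"
proof -
  have "(\<Sum>i<m. v i * feature_gain phi Q a b i) = (\<Sum>i\<in>{..<m} \<inter> Q. v i * (phi b i - phi a i))"
    unfolding feature_gain_def by (auto simp: sum.inter_restrict intro!: sum.cong)
  also have "{..<m} \<inter> Q = Q" using assms by blast
  finally show ?thesis by (simp add: upart_def sum_subtractf right_diff_distrib)
qed

lemma sum_feature_gain_sq_le:
  assumes "Q \<subseteq> {..<m}" and "\<And>i. i < m \<Longrightarrow> \<bar>phi a i\<bar> \<le> D \<and> \<bar>phi b i\<bar> \<le> D"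
  shows "(\<Sum>i<m. (feature_gain phi Q a b i)\<^sup>2) \<le> 4 * D\<^sup>2 * card Q"
proof -
  have "(\<Sum>i<m. (feature_gain phi Q a b i)\<^sup>2) = (\<Sum>i\<in>{..<m} \<inter> Q. (phi b i - phi a i)\<^sup>2)"
    unfolding feature_gain_def by (auto simp: sum.inter_restrict intro!: sum.cong)
  also have "{..<m} \<inter> Q = Q" using assms(1) by blast
  also have "(\<Sum>i\<in>Q. (phi b i - phi a i)\<^sup>2) \<le> (\<Sum>i\<in>Q. (2 * D)\<^sup>2)"
  proof (rule sum_mono)
    fix i assume "i \<in> Q"
    then have "\<bar>phi b i - phi a i\<bar> \<le> 2 * D" using assms by fastforce
    then show "(phi b i - phi a i)\<^sup>2 \<le> (2 * D)\<^sup>2"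
      by (metis abs_ge_zero power2_abs power_mono)
  qed
  finally show ?thesis by (simp add: power_mult_distrib mult.commute)
qed

lemma sum_mult_le_eucl_norm:
  "(\<Sum>i<m. a i * b i) \<le> eucl_norm a m * eucl_norm b m"
proof -
  have "(\<Sum>i<m. a i * b i) \<le> sqrt ((\<Sum>i<m. a i * b i)\<^sup>2)" by simp
  also have "\<dots> \<le> sqrt ((\<Sum>i<m. (a i)\<^sup>2) * (\<Sum>i<m. (b i)\<^sup>2))"
    by (rule real_sqrt_le_mono) (rule Cauchy_Schwarz_ineq_sum)
  finally show ?thesis unfolding eucl_norm_def by (simp add: real_sqrt_mult)
qed

lemma perceptron_sq_norm_bound:
  fixes v e :: "nat \<Rightarrow> nat \<Rightarrow> real"
  assumes "v 1 = (\<lambda>i. 0)"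
    and "\<And>t i. t \<in> {1..n} \<Longrightarrow> v (Suc t) i = v t i + e t i"
    and "\<And>t. t \<in> {1..n} \<Longrightarrow> (\<Sum>i<m. v t i * e t i) \<le> 0"
    and "\<And>t. t \<in> {1..n} \<Longrightarrow> (\<Sum>i<m. (e t i)\<^sup>2) \<le> B"
  shows "(\<Sum>i<m. (v (Suc n) i)\<^sup>2) \<le> B * n"
  using assms(2-4)
proof (induction n)
  case 0
  then show ?case using assms(1) by simp
next
  case (Suc n)
  have t: "Suc n \<in> {1..Suc n}" by simp
  have "(\<Sum>i<m. (v (Suc (Suc n)) i)\<^sup>2)
      = (\<Sum>i<m. (v (Suc n) i)\<^sup>2) + 2 * (\<Sum>i<m. v (Suc n) i * e (Suc n) i) + (\<Sum>i<m. (e (Suc n) i)\<^sup>2)"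
    by (simp add: Suc.prems(1)[OF t] power2_sum sum.distrib sum_distrib_left mult.assoc)
  also have "\<dots> \<le> B * n + 2 * 0 + B"
    using Suc.IH Suc.prems t by (intro add_mono mult_left_mono) auto
  finally show ?case by (simp add: algebra_simps)
qed

lemma telescoping_from_zero:
  fixes v e :: "nat \<Rightarrow> nat \<Rightarrow> real"
  assumes "v 1 = (\<lambda>i. 0)" and "\<And>t i. t \<in> {1..n} \<Longrightarrow> v (Suc t) i = v t i + e t i"
  shows "v (Suc n) i = (\<Sum>t=1..n. e t i)"
  using assms(2) by (induction n) (auto simp: assms(1)[unfolded One_nat_def])

lemma average_regret_arith:
  fixes C Z N R D \<alpha> :: real and S T :: nat
  assumes "\<alpha> * C \<le> N * R + Z" and "R\<^sup>2 \<le> 4 * D\<^sup>2 * S * T"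
    and "0 \<le> D" and "0 \<le> N" and "0 < \<alpha>" and "0 < T"
  shows "(1 / real T) * C \<le> 2 * D * S * N / (\<alpha> * sqrt T) + (1 / (\<alpha> * T)) * Z"
proof -
  have "\<bar>R\<bar> \<le> sqrt ((2 * D)\<^sup>2 * S * T)"
    using assms(2) by (intro real_le_rsqrt) (simp add: power_mult_distrib)
  also have "\<dots> = 2 * D * sqrt S * sqrt T" using assms(3) by (simp add: real_sqrt_mult)
  also have "\<dots> \<le> 2 * D * S * sqrt T"
  proof -
    have "real S \<le> (real S)\<^sup>2" by (cases S) (simp_all add: power2_eq_square)
    then have "sqrt (real S) \<le> real S" by (simp add: real_le_lsqrt)
    then show ?thesis using assms(3) by (simp add: mult_mono)
  qed
  finally have "N * R \<le> N * (2 * D * S * sqrt T)"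
    using assms(4) by (meson abs_ge_self mult_left_mono order.trans)
  then have scaled: "\<alpha> * C \<le> 2 * D * S * N * sqrt T + Z" using assms(1) by (simp add: algebra_simps)
  have "(1 / real T) * C = (\<alpha> * C) / (\<alpha> * T)" using assms(5) by simp
  also have "\<dots> \<le> (2 * D * S * N * sqrt T + Z) / (\<alpha> * T)"
    using scaled assms(5,6) by (intro divide_right_mono) auto
  also have "\<dots> = 2 * D * S * N * sqrt T / (\<alpha> * T) + (1 / (\<alpha> * T)) * Z"
    by (simp add: add_divide_distrib)
  also have "2 * D * S * N * sqrt T / (\<alpha> * T) = 2 * D * S * N / (\<alpha> * sqrt T)"
    by (metis divide_divide_eq_left divide_divide_times_eq of_nat_0_le_iff real_div_sqrt)
  finally show ?thesis .
qed

lemma Jset_subset: "Jset I ps k \<subseteq> I (ps ! k)"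
  by (auto simp: Jset_def)

lemma Qset_subset: "Qset I ps v phi k a b \<subseteq> I (ps ! k)"
  using Jset_subset by (auto simp: Qset_def)

lemma Qset_gain_nonpos:
  assumes "upart v phi (Jset I ps k) b \<le> upart v phi (Jset I ps k) a"
  shows "upart v phi (Qset I ps v phi k a b) b - upart v phi (Qset I ps v phi k a b) a \<le> 0"
  using assms by (simp add: Qset_def)

lemma Qset_gain_eq_part_gain_minus_zeta:
  assumes "finite (I (ps ! k))"
  shows "upart ws phi (Qset I ps v phi k a b) b - upart ws phi (Qset I ps v phi k a b) a
       = upart ws phi (I (ps ! k)) b - upart ws phi (I (ps ! k)) a - zeta ws I ps v phi k a b"
proof (cases "Qset I ps v phi k a b = I (ps ! k)")
  case True
  then show ?thesis by (simp add: zeta_def)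
next
  case False
  then have "Qset I ps v phi k a b = Jset I ps k" by (simp add: Qset_def split: if_splits)
  then show ?thesis
    using False upart_subset_diff[OF assms Jset_subset[of I ps k], of ws phi] by (simp add: zeta_def)
qed

lemma CREG_eq_part_gain:
  assumes "I p \<subseteq> {..<m}" and "ys \<in> Xp p"
    and "\<And>y. y \<in> Xp p \<Longrightarrow> upart ws phi {..<m} (z(p := y)) \<le> upart ws phi {..<m} (z(p := ys))"
    and "\<And>i. i < m \<Longrightarrow> i \<notin> I p \<Longrightarrow> phi (z(p := ys)) i = phi z i"
  shows "CREG ws phi m Xp p z = upart ws phi (I p) (z(p := ys)) - upart ws phi (I p) z"
proof -
  have "(SUP y\<in>Xp p. upart ws phi {..<m} (z(p := y))) = upart ws phi {..<m} (z(p := ys))"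
    using assms(2,3) by (intro cSup_eq_maximum) auto
  moreover have "upart ws phi ({..<m} - I p) (z(p := ys)) = upart ws phi ({..<m} - I p) z"
    unfolding upart_def using assms(4) by (intro sum.cong) auto
  ultimately show ?thesis
    unfolding CREG_def
    using upart_subset_diff[OF finite_lessThan assms(1), of ws phi "z(p := ys)"]
      upart_subset_diff[OF finite_lessThan assms(1), of ws phi z] by simp
qed

locale pcl_run =
  fixes X :: "('p \<Rightarrow> 'a) set" and Xp :: "'p \<Rightarrow> 'a set" and P :: "'p set"
    and ps :: "'p list" and phi :: "('p \<Rightarrow> 'a) \<Rightarrow> nat \<Rightarrow> real" and m :: nat
    and D :: real and ws :: "nat \<Rightarrow> real" and I :: "'p \<Rightarrow> nat set"
    and \<alpha> :: real and T :: nat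
    and x :: "nat \<Rightarrow> 'p \<Rightarrow> 'a" and xh :: "nat \<Rightarrow> 'p \<Rightarrow> 'a"
    and k :: "nat \<Rightarrow> nat" and w :: "nat \<Rightarrow> nat \<Rightarrow> real"
  assumes finite_P: "finite P"
    and set_ps: "set ps \<subseteq> P"
    and fun_upd_in_X: "\<And>z p y. z \<in> X \<Longrightarrow> p \<in> P \<Longrightarrow> y \<in> Xp p \<Longrightarrow> z(p := y) \<in> X"
    and feature_bound: "\<And>z i. z \<in> X \<Longrightarrow> i < m \<Longrightarrow> \<bar>phi z i\<bar> \<le> D"
    and I_subset: "\<And>p. p \<in> P \<Longrightarrow> I p \<subseteq> {..<m}"
    and I_nonempty: "\<And>p. p \<in> P \<Longrightarrow> I p \<noteq> {}"
    and feature_outside_I: "\<And>p z y i. p \<in> P \<Longrightarrow> z \<in> X \<Longrightarrow> y \<in> Xp p \<Longrightarrow> i < m \<Longrightarrow> i \<notin> I p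
                              \<Longrightarrow> phi (z(p := y)) i = phi z i"
    and best_response: "\<And>z p. z \<in> X \<Longrightarrow> p \<in> P \<Longrightarrow> \<exists>y\<in>Xp p. \<forall>y'\<in>Xp p.
                          upart ws phi {..<m} (z(p := y')) \<le> upart ws phi {..<m} (z(p := y))"
    and alpha_pos: "0 < \<alpha>" and T_pos: "1 \<le> T"
    and x0_in_X: "x 0 \<in> X" and w1: "w 1 = (\<lambda>i. 0)"
    and k_less: "\<And>t. t \<in> {1..T} \<Longrightarrow> k t < length ps"
    and query: "\<And>t. t \<in> {1..T} \<Longrightarrow>
                  x t = (x (t - 1))(ps ! k t := x t (ps ! k t)) \<and> x t (ps ! k t) \<in> Xp (ps ! k t)"
    and query_max: "\<And>t y. t \<in> {1..T} \<Longrightarrow> y \<in> Xp (ps ! k t) \<Longrightarrow>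
                      upart (w t) phi (Jset I ps (k t)) ((x (t - 1))(ps ! k t := y))
                      \<le> upart (w t) phi (Jset I ps (k t)) (x t)"
    and feedback: "\<And>t. t \<in> {1..T} \<Longrightarrow>
                     xh t = (x t)(ps ! k t := xh t (ps ! k t)) \<and> xh t (ps ! k t) \<in> Xp (ps ! k t)"
    and update: "\<And>t i. t \<in> {1..T} \<Longrightarrow> w (Suc t) i =
                   (if i \<in> Qset I ps (w t) phi (k t) (x t) (xh t)
                    then w t i + phi (xh t) i - phi (x t) i else w t i)"
    and informative: "\<And>t ys. t \<in> {1..T} \<Longrightarrow> ys \<in> Xp (ps ! k t) \<Longrightarrow>
                 (\<forall>y\<in>Xp (ps ! k t). upart ws phi {..<m} ((x t)(ps ! k t := y))
                                   \<le> upart ws phi {..<m} ((x t)(ps ! k t := ys))) \<Longrightarrow>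
                 \<alpha> * (upart ws phi (I (ps ! k t)) ((x t)(ps ! k t := ys)) - upart ws phi (I (ps ! k t)) (x t))
                 \<le> upart ws phi (I (ps ! k t)) (xh t) - upart ws phi (I (ps ! k t)) (x t)"
begin

abbreviation part :: "nat \<Rightarrow> 'p" where
  "part t \<equiv> ps ! k t"

abbreviation update_dir :: "nat \<Rightarrow> nat \<Rightarrow> real" where
  "update_dir t \<equiv> feature_gain phi (Qset I ps (w t) phi (k t) (x t) (xh t)) (x t) (xh t)"

abbreviation max_part_size :: nat where
  "max_part_size \<equiv> Max ((\<lambda>p. card (I p)) ` P)"

lemma part_in_P: "t \<in> {1..T} \<Longrightarrow> part t \<in> P"
  using k_less set_ps nth_mem by blast

lemma x_in_X: "t \<le> T \<Longrightarrow> x t \<in> X"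
proof (induction t)
  case 0
  then show ?case using x0_in_X by simp
next
  case (Suc t)
  then have "Suc t \<in> {1..T}" by simp
  then show ?case using Suc fun_upd_in_X part_in_P query by (metis Suc_leD diff_Suc_1)
qed

lemma xh_in_X: "t \<in> {1..T} \<Longrightarrow> xh t \<in> X"
  using feedback fun_upd_in_X part_in_P x_in_X by (metis atLeastAtMost_iff)

lemma Qset_subset_features: "t \<in> {1..T} \<Longrightarrow> Qset I ps (w t) phi (k t) (x t) (xh t) \<subseteq> {..<m}"
  using Qset_subset I_subset part_in_P by blast

lemma w_Suc: "t \<in> {1..T} \<Longrightarrow> w (Suc t) i = w t i + update_dir t i"
  using update by (simp add: feature_gain_def)

text \<open>The feedback only changes the queried part of x (t - 1), over which x t maximises
the current J-utility.\<close>

lemma update_dir_inner_nonpos: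
  assumes "t \<in> {1..T}"
  shows "(\<Sum>i<m. w t i * update_dir t i) \<le> 0"
proof -
  have "xh t = (x (t - 1))(part t := xh t (part t))"
    using feedback[OF assms] query[OF assms] by (metis fun_upd_upd)
  then have J_gain: "upart (w t) phi (Jset I ps (k t)) (xh t) \<le> upart (w t) phi (Jset I ps (k t)) (x t)"
    using query_max[OF assms] feedback[OF assms] by metis
  show ?thesis
    using Qset_gain_nonpos[OF J_gain]
      sum_mult_feature_gain[OF Qset_subset_features[OF assms], of "w t" phi "x t" "xh t"] by simp
qed

lemma update_dir_sq_le:
  assumes "t \<in> {1..T}"
  shows "(\<Sum>i<m. (update_dir t i)\<^sup>2) \<le> 4 * D\<^sup>2 * max_part_size"
proof -
  have "card (Qset I ps (w t) phi (k t) (x t) (xh t)) \<le> card (I (part t))"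
    using Qset_subset I_subset part_in_P[OF assms] by (meson card_mono finite_lessThan finite_subset)
  also have "\<dots> \<le> max_part_size"
    using finite_P part_in_P[OF assms] by (intro Max_ge) auto
  finally have card_le: "card (Qset I ps (w t) phi (k t) (x t) (xh t)) \<le> max_part_size" .
  have "(\<Sum>i<m. (update_dir t i)\<^sup>2) \<le> 4 * D\<^sup>2 * card (Qset I ps (w t) phi (k t) (x t) (xh t))"
    using feature_bound x_in_X xh_in_X[OF assms] assms
    by (intro sum_feature_gain_sq_le[OF Qset_subset_features[OF assms]]) auto
  also have "\<dots> \<le> 4 * D\<^sup>2 * max_part_size"
    using card_le by (intro mult_left_mono) auto
  finally show ?thesis .
qed

lemma alpha_CREG_le:
  assumes "t \<in> {1..T}"
  shows "\<alpha> * CREG ws phi m Xp (part t) (x t)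
         \<le> (\<Sum>i<m. ws i * update_dir t i) + zeta ws I ps (w t) phi (k t) (x t) (xh t)"
proof -
  have xt: "x t \<in> X" using x_in_X assms by simp
  obtain ys where ys: "ys \<in> Xp (part t)"
    and best: "\<forall>y\<in>Xp (part t). upart ws phi {..<m} ((x t)(part t := y))
                              \<le> upart ws phi {..<m} ((x t)(part t := ys))"
    using best_response[OF xt part_in_P[OF assms]] by blast
  have "CREG ws phi m Xp (part t) (x t)
      = upart ws phi (I (part t)) ((x t)(part t := ys)) - upart ws phi (I (part t)) (x t)"
    using I_subset part_in_P[OF assms] ys best feature_outside_I[OF part_in_P[OF assms] xt ys]
    by (intro CREG_eq_part_gain) auto
  moreover have "finite (I (part t))"
    using I_subset part_in_P[OF assms] finite_subset by blast
  ultimately show ?thesis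
    using informative[OF assms ys best] Qset_gain_eq_part_gain_minus_zeta[of I ps "k t" ws phi "w t" "x t" "xh t"]
      sum_mult_feature_gain[OF Qset_subset_features[OF assms], of ws phi "x t" "xh t"] by simp
qed

lemma D_nonneg: "0 \<le> D"
proof -
  have "part 1 \<in> P" using T_pos part_in_P by simp
  then obtain i where "i \<in> I (part 1)" "I (part 1) \<subseteq> {..<m}" using I_nonempty I_subset by blast
  then show ?thesis using feature_bound[OF x0_in_X, of i] by auto
qed

theorem average_regret_bound:
  "(1 / real T) * (\<Sum>t=1..T. CREG ws phi m Xp (part t) (x t))
   \<le> 2 * D * real max_part_size * eucl_norm ws m / (\<alpha> * sqrt (real T))
     + (1 / (\<alpha> * real T)) * (\<Sum>t=1..T. zeta ws I ps (w t) phi (k t) (x t) (xh t))"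
proof (rule average_regret_arith)
  have "\<alpha> * (\<Sum>t=1..T. CREG ws phi m Xp (part t) (x t))
      \<le> (\<Sum>t=1..T. (\<Sum>i<m. ws i * update_dir t i) + zeta ws I ps (w t) phi (k t) (x t) (xh t))"
    unfolding sum_distrib_left by (intro sum_mono alpha_CREG_le)
  also have "\<dots> = (\<Sum>i<m. ws i * w (Suc T) i)
                  + (\<Sum>t=1..T. zeta ws I ps (w t) phi (k t) (x t) (xh t))"
  proof -
    have "w (Suc T) i = (\<Sum>t=1..T. update_dir t i)" for i
      using w1 w_Suc by (rule telescoping_from_zero)
    then have "(\<Sum>t=1..T. \<Sum>i<m. ws i * update_dir t i) = (\<Sum>i<m. ws i * w (Suc T) i)"
      by (simp add: sum_distrib_left) (rule sum.swap)
    then show ?thesis by (simp add: sum.distrib)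
  qed
  also have "\<dots> \<le> eucl_norm ws m * eucl_norm (w (Suc T)) m
                  + (\<Sum>t=1..T. zeta ws I ps (w t) phi (k t) (x t) (xh t))"
    using sum_mult_le_eucl_norm by simp
  finally show "\<alpha> * (\<Sum>t=1..T. CREG ws phi m Xp (part t) (x t))
      \<le> eucl_norm ws m * eucl_norm (w (Suc T)) m + (\<Sum>t=1..T. zeta ws I ps (w t) phi (k t) (x t) (xh t))" .
  show "(eucl_norm (w (Suc T)) m)\<^sup>2 \<le> 4 * D\<^sup>2 * max_part_size * T"
    unfolding eucl_norm_def
    using perceptron_sq_norm_bound[OF w1 w_Suc update_dir_inner_nonpos update_dir_sq_le]
    by (simp add: sum_nonneg)
  show "0 \<le> eucl_norm ws m" by (simp add: eucl_norm_def sum_nonneg)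
qed (use D_nonneg alpha_pos T_pos in auto)

end

theorem theorem2:
  fixes X :: "('p \<Rightarrow> 'a) set" and Xp :: "'p \<Rightarrow> 'a set" and P :: "'p set"
    and ps :: "'p list" and phi :: "('p \<Rightarrow> 'a) \<Rightarrow> nat \<Rightarrow> real" and m :: nat
    and D :: real and ws :: "nat \<Rightarrow> real" and I :: "'p \<Rightarrow> nat set"
    and \<alpha> :: real and T :: nat
    and x :: "nat \<Rightarrow> 'p \<Rightarrow> 'a" and xh :: "nat \<Rightarrow> 'p \<Rightarrow> 'a"
    and k :: "nat \<Rightarrow> nat" and w :: "nat \<Rightarrow> nat \<Rightarrow> real"
  assumes finP: "finite P"
    and Xparts: "\<forall>z\<in>X. \<forall>p\<in>P. z p \<in> Xp p"
    and comb: "\<forall>z\<in>X. \<forall>p\<in>P. \<forall>y\<in>Xp p. z(p := y) \<in> X"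
    and bound: "\<forall>z\<in>X. \<forall>i<m. \<bar>phi z i\<bar> \<le> D"
    and Isub: "\<forall>p\<in>P. I p \<subseteq> {..<m}"
    and Idep: "\<forall>p\<in>P. \<forall>i<m. i \<in> I p \<longleftrightarrow> (\<exists>z\<in>X. \<exists>y\<in>Xp p. phi (z(p := y)) i \<noteq> phi z i)"
    and Iown: "\<forall>p\<in>P. \<exists>i\<in>I p. \<forall>q\<in>P. q \<noteq> p \<longrightarrow> i \<notin> I q"
    and Icover: "(\<Union>p\<in>P. I p) = {..<m}"
    and maxex: "\<forall>z\<in>X. \<forall>p\<in>P. \<exists>y\<in>Xp p. \<forall>y'\<in>Xp p.
                   upart ws phi {..<m} (z(p := y')) \<le> upart ws phi {..<m} (z(p := y))"
    and ps_dist: "distinct ps" and ps_set: "set ps = P"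
    and alpha_pos: "0 < \<alpha>" and alpha_le: "\<alpha> \<le> 1"
    and T_pos: "1 \<le> T"
    and x0: "x 0 \<in> X"
    and w1: "w 1 = (\<lambda>i. 0)"
    and sel: "\<forall>t\<in>{1..T}. k t < length ps"
    and step: "\<forall>t\<in>{1..T}. let p = ps ! k t in
                 x t = (x (t - 1))(p := x t p) \<and> x t p \<in> Xp p \<and>
                 (\<forall>y\<in>Xp p. upart (w t) phi (Jset I ps (k t)) ((x (t - 1))(p := y))
                              \<le> upart (w t) phi (Jset I ps (k t)) (x t))"
    and user: "\<forall>t\<in>{1..T}. let p = ps ! k t in
                 xh t = (x t)(p := xh t p) \<and> xh t p \<in> Xp p"
    and user_noimp: "\<forall>t\<in>{1..T}. let p = ps ! k t in
                 (\<forall>y\<in>Xp p. upart ws phi {..<m} ((x t)(p := y)) \<le> upart ws phi {..<m} (x t))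
                 \<longrightarrow> xh t = x t"
    and update: "\<forall>t\<in>{1..T}. \<forall>i. w (Suc t) i =
                 (if i \<in> Qset I ps (w t) phi (k t) (x t) (xh t)
                  then w t i + phi (xh t) i - phi (x t) i else w t i)"
    and informative: "\<forall>t\<in>{1..T}. let p = ps ! k t in
                 \<forall>ys\<in>Xp p. (\<forall>y\<in>Xp p. upart ws phi {..<m} ((x t)(p := y))
                                     \<le> upart ws phi {..<m} ((x t)(p := ys)))
                 \<longrightarrow> upart ws phi (I p) (xh t) - upart ws phi (I p) (x t)
                     \<ge> \<alpha> * (upart ws phi (I p) ((x t)(p := ys)) - upart ws phi (I p) (x t))"
  shows "(1 / real T) * (\<Sum>t=1..T. CREG ws phi m Xp (ps ! k t) (x t))
           \<le> 2 * D * real (Max ((\<lambda>p. card (I p)) ` P)) * eucl_norm ws m / (\<alpha> * sqrt (real T))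
             + (1 / (\<alpha> * real T)) * (\<Sum>t=1..T. zeta ws I ps (w t) phi (k t) (x t) (xh t))"
proof -
  interpret pcl_run X Xp P ps phi m D ws I \<alpha> T x xh k w
    using assms by unfold_locales (auto simp: Let_def)
  show ?thesis by (rule average_regret_bound)
qed

end
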